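(* Let $|\Psi\rangle$ be a normalized state of $N$ qubits given by an open MPS in canonical Vidal form $\{\Gamma^{[i]},\Lambda^{[j]}\}$, fix a positive integer $\chi'$, let $|\tilde{\Psi}_{T}\rangle$ be the parallel-compressed MPS and $n=\big\||\tilde{\Psi}_{T}\rangle\big\|$. For $i=1,\dots,N-1$ let $\epsilon_i(\chi')=\sum_{\alpha>\chi'}(\Lambda^{[i]}_{\alpha\alpha})^2$, $\epsilon(\chi')=\sum_{i=1}^{N-1}\epsilon_i(\chi')$, $\nu_i=[1-\epsilon_i(\chi')]^{-1/2}$, and define the stabilized norm $n^*=n\prod_{i=1}^{N-1}\nu_i$. Then $$n^*_{\mathrm{lower}}\le n^*\le n^*_{\mathrm{upper}},\qquad n^*_{\mathrm{lower}}=\Big(1-\sqrt{2\epsilon(\chi')}\Big)\prod_{i=1}^{N-1}\nu_i,\quad n^*_{\mathrm{upper}}=\prod_{i=1}^{N-1}\nu_i,$$ with $n^*_{\mathrm{lower}}\le 1$ and $n^*_{\mathrm{upper}}\ge 1$. Moreover, $n^*_{\mathrm{lower}}$ and $n^*_{\mathrm{upper}}$ converge to $1$ uniformly as $\epsilon(\chi')\to 0$ (i.e., for every $\delta>0$ there is $\eta>0$, independent of $N$ and of the MPS, such that $\epsilon(\chi')<\eta$ implies $|n^*_{\mathrm{lower}}-1|<\delta$ and $|n^*_{\mathrm{upper}}-1|<\delta$).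
   Context: An open MPS in Vidal form on $N$ sites with local dimension $d$ (here $d=2$) consists of tensors $\Gamma^{[i]\sigma_i}$ ($i=1,\dots,N$), each a $\chi_{i-1}\times\chi_i$ matrix for fixed $\sigma_i$, and real diagonal $\chi_i\times\chi_i$ matrices $\Lambda^{[i]}$ ($i=0,\dots,N$) with nonnegative diagonal entries in descending order, $\chi_0=\chi_N=1$, $\Lambda^{[0]}=\Lambda^{[N]}=(1)$, representing $|\Psi\rangle=\sum_{\sigma}\mathrm{Tr}(\Lambda^{[0]}\Gamma^{[1]\sigma_1}\Lambda^{[1]}\cdots\Lambda^{[N-1]}\Gamma^{[N]\sigma_N}\Lambda^{[N]})|\sigma_1\cdots\sigma_N\rangle$. Canonical form means: for every $i$, with $A^{[i]\sigma}=\Lambda^{[i-1]}\Gamma^{[i]\sigma}$ and $B^{[i]\sigma}=\Gamma^{[i]\sigma}\Lambda^{[i]}$, $\sum_\sigma (A^{[i]\sigma})^\dagger A^{[i]\sigma}=I_{\chi_i}$ and $\sum_\sigma B^{[i]\sigma}(B^{[i]\sigma})^\dagger=I_{\chi_{i-1}}$; then $\sum_\alpha(\Lambda^{[i]}_{\alpha\alpha})^2=1$ for each $i$ (so $\epsilon_i(\chi')<1$ when $\chi'\ge1$). $P_i$ is the projector onto the first $\min(\chi',\chi_i)$ standard basis vectors of the bond-$i$ space, and the parallel-compressed state is $|\tilde{\Psi}_{T}\rangle=\sum_{\sigma}\mathrm{Tr}(\Lambda^{[0]}\Gamma^{[1]\sigma_1}P_1\Lambda^{[1]}\Gamma^{[2]\sigma_2}\cdots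 P_{N-1}\Lambda^{[N-1]}\Gamma^{[N]\sigma_N}\Lambda^{[N]})|\sigma_1\cdots\sigma_N\rangle$. Empty sums are zero. *)

theory Defs
  imports "HOL-Analysis.Analysis" "HOL-Library.FuncSet"
begin

text \<open>Open MPS in Vidal form on N qubits (local dimension 2), all indices 0-based:
  Gam i s a b  = entry (a,b) of Gamma^{[i] s}, i = 1..N, s < 2, a < chi (i-1), b < chi i;
  Lam i a      = diagonal entry a of Lambda^{[i]}, i = 0..N, a < chi i;
  chi i        = bond dimension chi_i.
  Entries outside these ranges are never used.\<close>

definition canonical_mps ::
  "nat \<Rightarrow> (nat \<Rightarrow> nat) \<Rightarrow> (nat \<Rightarrow> nat \<Rightarrow> nat \<Rightarrow> nat \<Rightarrow> complex) \<Rightarrow> (nat \<Rightarrow> nat \<Rightarrow> real) \<Rightarrow> bool"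
  where
  "canonical_mps N chi Gam Lam \<longleftrightarrow>
     N \<ge> 1 \<and> chi 0 = 1 \<and> chi N = 1 \<and> (\<forall>i\<le>N. chi i \<ge> 1) \<and>
     Lam 0 0 = 1 \<and> Lam N 0 = 1 \<and>
     (\<forall>i\<le>N. \<forall>a<chi i. Lam i a \<ge> 0) \<and>
     (\<forall>i\<le>N. \<forall>a b. a \<le> b \<longrightarrow> b < chi i \<longrightarrow> Lam i b \<le> Lam i a) \<and>
     (\<forall>i\<in>{1..N}. \<forall>b<chi i. \<forall>c<chi i.
        (\<Sum>s<2. \<Sum>a<chi (i - 1).
            cnj (complex_of_real (Lam (i - 1) a) * Gam i s a b)
              * (complex_of_real (Lam (i - 1) a) * Gam i s a c))
        = (if b = c then 1 else 0)) \<and>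
     (\<forall>i\<in>{1..N}. \<forall>a<chi (i - 1). \<forall>a'<chi (i - 1).
        (\<Sum>s<2. \<Sum>b<chi i.
            (Gam i s a b * complex_of_real (Lam i b))
              * cnj (Gam i s a' b * complex_of_real (Lam i b)))
        = (if a = a' then 1 else 0))"

text \<open>Partial contraction: row vector Lam^{[0]} Gam^{[1] s_1} W^{[1]} ... Gam^{[i] s_i} W^{[i]},
  where W are the (possibly projected) bond weights.\<close>
primrec mps_vec ::
  "(nat \<Rightarrow> nat \<Rightarrow> nat \<Rightarrow> nat \<Rightarrow> complex) \<Rightarrow> (nat \<Rightarrow> nat \<Rightarrow> real) \<Rightarrow> (nat \<Rightarrow> nat)
     \<Rightarrow> (nat \<Rightarrow> nat) \<Rightarrow> nat \<Rightarrow> nat \<Rightarrow> complex" where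
  "mps_vec Gam W chi \<sigma> 0 = (\<lambda>\<beta>. complex_of_real (W 0 \<beta>))"
| "mps_vec Gam W chi \<sigma> (Suc i) =
     (\<lambda>\<beta>. (\<Sum>\<alpha><chi i. mps_vec Gam W chi \<sigma> i \<alpha> * Gam (Suc i) (\<sigma> (Suc i)) \<alpha> \<beta>)
            * complex_of_real (W (Suc i) \<beta>))"

text \<open>Amplitude <sigma_1...sigma_N|Psi> (trace of a 1x1 matrix since chi_0 = chi_N = 1).\<close>
definition mps_amp where
  "mps_amp N chi Gam W \<sigma> = mps_vec Gam W chi \<sigma> N 0"

definition mps_norm ::
  "nat \<Rightarrow> (nat \<Rightarrow> nat) \<Rightarrow> (nat \<Rightarrow> nat \<Rightarrow> nat \<Rightarrow> nat \<Rightarrow> complex) \<Rightarrow> (nat \<Rightarrow> nat \<Rightarrow> real) \<Rightarrow> real"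
  where
  "mps_norm N chi Gam W =
     sqrt (\<Sum>\<sigma>\<in>(PiE {1..N} (\<lambda>_. {..<2::nat})). (cmod (mps_amp N chi Gam W \<sigma>))\<^sup>2)"

text \<open>Bond weights P_i Lambda^{[i]} of the parallel-compressed MPS: keep the first chi' entries
  on the internal bonds 1..N-1.\<close>
definition trunc_weights :: "nat \<Rightarrow> nat \<Rightarrow> (nat \<Rightarrow> nat \<Rightarrow> real) \<Rightarrow> nat \<Rightarrow> nat \<Rightarrow> real" where
  "trunc_weights N chi' Lam = (\<lambda>i \<alpha>. if 0 < i \<and> i < N \<and> chi' \<le> \<alpha> then 0 else Lam i \<alpha>)"

text \<open>epsilon_i(chi') = sum over alpha > chi' (1-based), i.e. 0-based alpha >= chi'.\<close>
definition eps_bond :: "(nat \<Rightarrow> nat) \<Rightarrow> (nat \<Rightarrow> nat \<Rightarrow> real) \<Rightarrow> nat \<Rightarrow> nat \<Rightarrow> real" where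
  "eps_bond chi Lam chi' i = (\<Sum>\<alpha>\<in>{chi'..<chi i}. (Lam i \<alpha>)\<^sup>2)"

definition eps_total :: "nat \<Rightarrow> (nat \<Rightarrow> nat) \<Rightarrow> (nat \<Rightarrow> nat \<Rightarrow> real) \<Rightarrow> nat \<Rightarrow> real" where
  "eps_total N chi Lam chi' = (\<Sum>i\<in>{1..<N}. eps_bond chi Lam chi' i)"

definition nu_prod :: "nat \<Rightarrow> (nat \<Rightarrow> nat) \<Rightarrow> (nat \<Rightarrow> nat \<Rightarrow> real) \<Rightarrow> nat \<Rightarrow> real" where
  "nu_prod N chi Lam chi' = (\<Prod>i\<in>{1..<N}. 1 / sqrt (1 - eps_bond chi Lam chi' i))"

definition stab_norm where
  "stab_norm N chi Gam Lam chi' =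
     mps_norm N chi Gam (trunc_weights N chi' Lam) * nu_prod N chi Lam chi'"

definition n_lower where
  "n_lower N chi Lam chi' = (1 - sqrt (2 * eps_total N chi Lam chi')) * nu_prod N chi Lam chi'"

definition n_upper where
  "n_upper N chi Lam chi' = nu_prod N chi Lam chi'"

end

theory Submission
  imports Defs
begin

text \<open>The left canonical conditions make every site tensor an isometry, so along the chain the
  partial contractions of any MPS whose bond weights are dominated by \<open>Lam\<close> have Gram matrix at
  most \<open>diag (Lam k)\<^sup>2\<close>; at the last site this gives \<open>n \<le> 1\<close>. The right canonical conditions
  make the overlap of the partial contractions of \<open>\<Psi>\<close> and \<open>\<Psi>\<^sub>T\<close> change at bond \<open>i\<close> only by the
  discarded Schmidt components, which the Gram bound controls by \<open>\<epsilon>\<^sub>i\<close>. Hence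
  \<open>Re \<langle>\<Psi>|\<Psi>\<^sub>T\<rangle> \<ge> 1 - \<epsilon>\<close>, and Cauchy-Schwarz gives \<open>n \<ge> 1 - \<epsilon> \<ge> 1 - sqrt (2 \<epsilon>)\<close>.
  Weierstrass' product inequality gives \<open>1 \<le> \<Prod> \<nu>\<^sub>i \<le> 1 / sqrt (1 - \<epsilon>)\<close>; the remaining bounds and
  the uniform convergence are elementary real analysis.\<close>

definition spin_configs :: "nat \<Rightarrow> (nat \<Rightarrow> nat) set" where
  "spin_configs k = PiE {1..k} (\<lambda>_. {..<2::nat})"

lemma spin_configs_0: "spin_configs 0 = {\<lambda>_. undefined}"
  unfolding spin_configs_def by simp

lemma sum_spin_configs_Suc:
  "(\<Sum>\<sigma>\<in>spin_configs (Suc k). f \<sigma>) = (\<Sum>\<sigma>\<in>spin_configs k. \<Sum>s<2. f (\<sigma>(Suc k := s)))"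
proof -
  let ?ext = "\<lambda>(s, \<sigma>). \<sigma>(Suc k := s)"
  have configs_Suc: "spin_configs (Suc k) = ?ext ` ({..<2} \<times> spin_configs k)"
    unfolding spin_configs_def using PiE_insert_eq[of "Suc k" "{1..k}" "\<lambda>_. {..<2::nat}"]
    by (simp add: atLeastAtMostSuc_conv)
  have "inj_on ?ext ({..<2} \<times> spin_configs k)"
    unfolding spin_configs_def by (rule inj_combinator) simp
  then have "(\<Sum>\<sigma>\<in>spin_configs (Suc k). f \<sigma>) = (\<Sum>(s, \<sigma>)\<in>{..<2} \<times> spin_configs k. f (\<sigma>(Suc k := s)))"
    unfolding configs_Suc by (simp add: sum.reindex case_prod_unfold)
  also have "\<dots> = (\<Sum>s<2. \<Sum>\<sigma>\<in>spin_configs k. f (\<sigma>(Suc k := s)))"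
    by (simp add: sum.cartesian_product)
  finally show ?thesis
    by (simp add: sum.swap[of _ "{..<2}"])
qed

lemma mps_vec_fun_upd: "k < j \<Longrightarrow> mps_vec Gam W chi (\<sigma>(j := s)) k = mps_vec Gam W chi \<sigma> k"
  by (induction k) auto

lemma mps_vec_cong:
  "(\<And>i. i \<le> k \<Longrightarrow> W i = W' i) \<Longrightarrow> mps_vec Gam W chi \<sigma> k = mps_vec Gam W' chi \<sigma> k"
  by (induction k) auto

lemma mps_vec_Suc_fun_upd:
  "mps_vec Gam W chi (\<sigma>(Suc k := s)) (Suc k) \<beta>
     = (\<Sum>\<alpha><chi k. Gam (Suc k) s \<alpha> \<beta> * complex_of_real (W (Suc k) \<beta>) * mps_vec Gam W chi \<sigma> k \<alpha>)"
  unfolding mps_vec.simps fun_upd_same mps_vec_fun_upd[OF lessI] sum_distrib_right by (simp add: mult_ac)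

lemma sum_cnj_mult_orthonormal_columns:
  fixes A :: "'s \<Rightarrow> 'a \<Rightarrow> 'b \<Rightarrow> complex"
  assumes "finite B"
    and orthonormal: "\<And>b c. b \<in> B \<Longrightarrow> c \<in> B \<Longrightarrow>
          (\<Sum>s\<in>S. \<Sum>a\<in>T. cnj (A s a b) * A s a c) = (if b = c then 1 else 0)"
  shows "(\<Sum>s\<in>S. \<Sum>a\<in>T. cnj (\<Sum>b\<in>B. A s a b * p b) * (\<Sum>c\<in>B. A s a c * q c))
       = (\<Sum>b\<in>B. cnj (p b) * q b)"
proof -
  have "(\<Sum>s\<in>S. \<Sum>a\<in>T. cnj (\<Sum>b\<in>B. A s a b * p b) * (\<Sum>c\<in>B. A s a c * q c))
      = (\<Sum>s\<in>S. \<Sum>a\<in>T. \<Sum>b\<in>B. \<Sum>c\<in>B. cnj (p b) * q c * (cnj (A s a b) * A s a c))"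
    unfolding cnj_sum sum_product by (simp add: mult_ac)
  also have "\<dots> = (\<Sum>s\<in>S. \<Sum>b\<in>B. \<Sum>c\<in>B. \<Sum>a\<in>T. cnj (p b) * q c * (cnj (A s a b) * A s a c))"
    by (simp only: sum.swap[where A = T])
  also have "\<dots> = (\<Sum>b\<in>B. \<Sum>c\<in>B. \<Sum>s\<in>S. \<Sum>a\<in>T. cnj (p b) * q c * (cnj (A s a b) * A s a c))"
    by (simp only: sum.swap[where A = S])
  also have "\<dots> = (\<Sum>b\<in>B. \<Sum>c\<in>B. cnj (p b) * q c * (if b = c then 1 else 0))"
    by (intro sum.cong refl) (simp add: orthonormal flip: sum_distrib_left)
  also have "\<dots> = (\<Sum>b\<in>B. cnj (p b) * q b)"
    using \<open>finite B\<close> by (simp add: if_distrib cong: if_cong)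
  finally show ?thesis .
qed

lemma canonical_mpsD:
  assumes "canonical_mps N chi Gam Lam"
  shows "chi 0 = 1" "chi N = 1" "Lam 0 0 = 1" "Lam N 0 = 1"
    and "i \<le> N \<Longrightarrow> 1 \<le> chi i"
    and "i \<le> N \<Longrightarrow> a < chi i \<Longrightarrow> 0 \<le> Lam i a"
    and "i \<le> N \<Longrightarrow> a \<le> b \<Longrightarrow> b < chi i \<Longrightarrow> Lam i b \<le> Lam i a"
  using assms unfolding canonical_mps_def by auto

lemma canonical_mps_left_orthonormal:
  assumes "canonical_mps N chi Gam Lam" "1 \<le> i" "i \<le> N" "b < chi i" "c < chi i"
  shows "(\<Sum>s<2. \<Sum>a<chi (i - 1).
            cnj (complex_of_real (Lam (i - 1) a) * Gam i s a b)
              * (complex_of_real (Lam (i - 1) a) * Gam i s a c))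
        = (if b = c then 1 else 0)"
  using assms unfolding canonical_mps_def by auto

lemma canonical_mps_right_orthonormal:
  assumes "canonical_mps N chi Gam Lam" "1 \<le> i" "i \<le> N" "a < chi (i - 1)" "a' < chi (i - 1)"
  shows "(\<Sum>s<2. \<Sum>b<chi i.
            cnj (Gam i s a b * complex_of_real (Lam i b)) * (Gam i s a' b * complex_of_real (Lam i b)))
        = (if a = a' then 1 else 0)"
proof -
  have "(\<Sum>s<2. \<Sum>b<chi i.
            (Gam i s a' b * complex_of_real (Lam i b)) * cnj (Gam i s a b * complex_of_real (Lam i b)))
      = (if a' = a then 1 else 0)"
    using assms unfolding canonical_mps_def by auto
  then show ?thesis by (simp add: mult.commute eq_commute)
qed

lemma of_real_sq_mult_cmod_sq:
  "complex_of_real (r\<^sup>2 * (cmod z)\<^sup>2) = cnj (complex_of_real r * z) * (complex_of_real r * z)"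
proof -
  have "complex_of_real (r\<^sup>2 * (cmod z)\<^sup>2) = complex_of_real (r\<^sup>2) * (z * cnj z)"
    by (simp only: of_real_mult complex_norm_square)
  then show ?thesis by (simp add: power2_eq_square mult_ac)
qed

lemma left_canonical_norm_preserving:
  assumes can: "canonical_mps N chi Gam Lam" and i: "1 \<le> i" "i \<le> N"
  shows "(\<Sum>s<2. \<Sum>a<chi (i - 1). (Lam (i - 1) a)\<^sup>2 * (cmod (\<Sum>b<chi i. Gam i s a b * z b))\<^sup>2)
       = (\<Sum>b<chi i. (cmod (z b))\<^sup>2)"
proof -
  let ?A = "\<lambda>s a b. complex_of_real (Lam (i - 1) a) * Gam i s a b"
  have "complex_of_real (\<Sum>s<2. \<Sum>a<chi (i - 1). (Lam (i - 1) a)\<^sup>2 * (cmod (\<Sum>b<chi i. Gam i s a b * z b))\<^sup>2)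
      = (\<Sum>s<2. \<Sum>a<chi (i - 1). cnj (\<Sum>b<chi i. ?A s a b * z b) * (\<Sum>c<chi i. ?A s a c * z c))"
    by (simp only: of_real_sum of_real_sq_mult_cmod_sq sum_distrib_left mult.assoc)
  also have "\<dots> = (\<Sum>b<chi i. cnj (z b) * z b)"
    using canonical_mps_left_orthonormal[OF can i] by (intro sum_cnj_mult_orthonormal_columns) auto
  also have "\<dots> = complex_of_real (\<Sum>b<chi i. (cmod (z b))\<^sup>2)"
    unfolding of_real_sum complex_norm_square by (simp add: mult.commute)
  finally show ?thesis by (simp only: of_real_eq_iff)
qed

lemma right_canonical_inner_preserving:
  assumes can: "canonical_mps N chi Gam Lam" and i: "1 \<le> i" "i \<le> N"
  shows "(\<Sum>s<2. \<Sum>b<chi i.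
            cnj (\<Sum>a<chi (i - 1). Gam i s a b * complex_of_real (Lam i b) * p a)
              * (\<Sum>a<chi (i - 1). Gam i s a b * complex_of_real (Lam i b) * q a))
       = (\<Sum>a<chi (i - 1). cnj (p a) * q a)"
  using canonical_mps_right_orthonormal[OF can i]
  by (intro sum_cnj_mult_orthonormal_columns) auto

lemma mps_vec_gram_le:
  assumes can: "canonical_mps N chi Gam Lam"
    and dominated: "\<And>i b. i \<le> N \<Longrightarrow> b < chi i \<Longrightarrow> \<bar>W i b\<bar> \<le> Lam i b"
  shows "k \<le> N \<Longrightarrow> (\<Sum>\<sigma>\<in>spin_configs k. (cmod (\<Sum>b<chi k. mps_vec Gam W chi \<sigma> k b * x b))\<^sup>2)
            \<le> (\<Sum>b<chi k. (Lam k b)\<^sup>2 * (cmod (x b))\<^sup>2)"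
proof (induction k arbitrary: x)
  case 0
  have "(W 0 0)\<^sup>2 \<le> (Lam 0 0)\<^sup>2"
    using dominated[of 0 0] canonical_mpsD(1,3)[OF can] by (simp add: abs_square_le_1)
  then show ?case
    using canonical_mpsD(1)[OF can]
    by (simp add: spin_configs_0 norm_mult power_mult_distrib mult_right_mono)
next
  case (Suc k)
  define y where "y s \<alpha> = (\<Sum>b<chi (Suc k). Gam (Suc k) s \<alpha> b * (complex_of_real (W (Suc k) b) * x b))"
    for s \<alpha>
  have contract: "(\<Sum>b<chi (Suc k). mps_vec Gam W chi (\<sigma>(Suc k := s)) (Suc k) b * x b)
        = (\<Sum>\<alpha><chi k. mps_vec Gam W chi \<sigma> k \<alpha> * y s \<alpha>)" for \<sigma> s
    unfolding mps_vec_Suc_fun_upd y_def sum_distrib_right sum_distrib_left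
    by (subst sum.swap) (simp add: mult_ac)
  have "(\<Sum>\<sigma>\<in>spin_configs (Suc k). (cmod (\<Sum>b<chi (Suc k). mps_vec Gam W chi \<sigma> (Suc k) b * x b))\<^sup>2)
      = (\<Sum>s<2. \<Sum>\<sigma>\<in>spin_configs k. (cmod (\<Sum>\<alpha><chi k. mps_vec Gam W chi \<sigma> k \<alpha> * y s \<alpha>))\<^sup>2)"
    unfolding sum_spin_configs_Suc contract by (rule sum.swap)
  also have "\<dots> \<le> (\<Sum>s<2. \<Sum>\<alpha><chi k. (Lam k \<alpha>)\<^sup>2 * (cmod (y s \<alpha>))\<^sup>2)"
    using Suc by (intro sum_mono) simp
  also have "\<dots> = (\<Sum>b<chi (Suc k). (cmod (complex_of_real (W (Suc k) b) * x b))\<^sup>2)"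
    unfolding y_def using left_canonical_norm_preserving[OF can _ Suc.prems] by simp
  also have "\<dots> \<le> (\<Sum>b<chi (Suc k). (Lam (Suc k) b)\<^sup>2 * (cmod (x b))\<^sup>2)"
  proof (rule sum_mono)
    fix b assume "b \<in> {..<chi (Suc k)}"
    then have "\<bar>W (Suc k) b\<bar> \<le> Lam (Suc k) b" using dominated Suc.prems by simp
    then have "(W (Suc k) b)\<^sup>2 \<le> (Lam (Suc k) b)\<^sup>2"
      using order.trans[OF abs_ge_zero] power2_le_iff_abs_le by blast
    then show "(cmod (complex_of_real (W (Suc k) b) * x b))\<^sup>2 \<le> (Lam (Suc k) b)\<^sup>2 * (cmod (x b))\<^sup>2"
      by (simp add: norm_mult power_mult_distrib mult_right_mono)
  qed
  finally show ?case .
qed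

lemma mps_vec_sum_sq_le:
  assumes "canonical_mps N chi Gam Lam"
    and "\<And>i b. i \<le> N \<Longrightarrow> b < chi i \<Longrightarrow> \<bar>W i b\<bar> \<le> Lam i b"
    and "k \<le> N" "\<alpha> < chi k"
  shows "(\<Sum>\<sigma>\<in>spin_configs k. (cmod (mps_vec Gam W chi \<sigma> k \<alpha>))\<^sup>2) \<le> (Lam k \<alpha>)\<^sup>2"
proof -
  have unit_vec: "(\<lambda>b. mps_vec Gam W chi \<sigma> k b * (if b = \<alpha> then 1 else 0))
      = (\<lambda>b. if b = \<alpha> then mps_vec Gam W chi \<sigma> k \<alpha> else 0)" for \<sigma>
    by auto
  have unit_weight: "(\<lambda>b. (Lam k b)\<^sup>2 * (cmod (if b = \<alpha> then 1 else 0 :: complex))\<^sup>2)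
      = (\<lambda>b. if b = \<alpha> then (Lam k \<alpha>)\<^sup>2 else 0)"
    by auto
  show ?thesis
    using mps_vec_gram_le[OF assms(1,2,3), of "\<lambda>b. if b = \<alpha> then 1 else 0"] assms(4)
    unfolding unit_vec unit_weight by simp
qed

lemma Lam_sum_sq_step:
  assumes can: "canonical_mps N chi Gam Lam" and i: "1 \<le> i" "i \<le> N"
  shows "(\<Sum>b<chi i. (Lam i b)\<^sup>2) = (\<Sum>a<chi (i - 1). (Lam (i - 1) a)\<^sup>2)"
proof -
  let ?f = "\<lambda>b s a. complex_of_real ((Lam (i - 1) a)\<^sup>2)
              * (cnj (Gam i s a b * complex_of_real (Lam i b)) * (Gam i s a b * complex_of_real (Lam i b)))"
  have "complex_of_real (\<Sum>b<chi i. (Lam i b)\<^sup>2)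
      = (\<Sum>b<chi i. complex_of_real ((Lam i b)\<^sup>2) * (\<Sum>s<2. \<Sum>a<chi (i - 1).
            cnj (complex_of_real (Lam (i - 1) a) * Gam i s a b)
              * (complex_of_real (Lam (i - 1) a) * Gam i s a b)))"
    using canonical_mps_left_orthonormal[OF can i] by (simp add: of_real_sum)
  also have "\<dots> = (\<Sum>b<chi i. \<Sum>s<2. \<Sum>a<chi (i - 1). ?f b s a)"
    by (simp add: sum_distrib_left power2_eq_square mult_ac)
  also have "\<dots> = (\<Sum>b<chi i. \<Sum>a<chi (i - 1). \<Sum>s<2. ?f b s a)"
    by (simp only: sum.swap[of _ "{..<2::nat}"])
  also have "\<dots> = (\<Sum>a<chi (i - 1). \<Sum>s<2. \<Sum>b<chi i. ?f b s a)"
    by (rule trans[OF sum.swap]) (simp only: sum.swap[of _ "{..<2::nat}"])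
  also have "\<dots> = (\<Sum>a<chi (i - 1). complex_of_real ((Lam (i - 1) a)\<^sup>2) * (\<Sum>s<2. \<Sum>b<chi i.
       cnj (Gam i s a b * complex_of_real (Lam i b)) * (Gam i s a b * complex_of_real (Lam i b))))"
    by (simp only: sum_distrib_left)
  also have "\<dots> = complex_of_real (\<Sum>a<chi (i - 1). (Lam (i - 1) a)\<^sup>2)"
    using canonical_mps_right_orthonormal[OF can i] by (simp add: of_real_sum)
  finally show ?thesis by (simp only: of_real_eq_iff)
qed

lemma Lam_sum_sq_eq_1:
  assumes can: "canonical_mps N chi Gam Lam"
  shows "i \<le> N \<Longrightarrow> (\<Sum>b<chi i. (Lam i b)\<^sup>2) = 1"
proof (induction i)
  case 0
  then show ?case using canonical_mpsD(1,3)[OF can] by simp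
next
  case (Suc i)
  then show ?case using Lam_sum_sq_step[OF can, of "Suc i"] by simp
qed

lemma eps_bond_nonneg: "0 \<le> eps_bond chi Lam chi' i"
  unfolding eps_bond_def by (rule sum_nonneg) simp

text \<open>Since the Schmidt values are sorted, \<open>Lam i 0\<close> is the largest and hence positive, and
  it is never discarded when \<open>chi' \<ge> 1\<close>.\<close>

lemma eps_bond_less_1:
  assumes can: "canonical_mps N chi Gam Lam" and i: "i \<le> N" and chi': "1 \<le> chi'"
  shows "eps_bond chi Lam chi' i < 1"
proof -
  have sum_1: "(\<Sum>b<chi i. (Lam i b)\<^sup>2) = 1" using Lam_sum_sq_eq_1[OF can i] .
  have "Lam i 0 \<noteq> 0"
  proof
    assume "Lam i 0 = 0"
    then have "Lam i b = 0" if "b < chi i" for b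
      using canonical_mpsD(6)[OF can i that] canonical_mpsD(7)[OF can i le0 that] by simp
    then show False using sum_1 by simp
  qed
  have "(Lam i 0)\<^sup>2 + eps_bond chi Lam chi' i = (\<Sum>b\<in>insert 0 {chi'..<chi i}. (Lam i b)\<^sup>2)"
    unfolding eps_bond_def using chi' by (subst sum.insert) auto
  also have "\<dots> \<le> (\<Sum>b<chi i. (Lam i b)\<^sup>2)"
    using canonical_mpsD(5)[OF can i] by (intro sum_mono2) auto
  moreover have "0 < (Lam i 0)\<^sup>2" using \<open>Lam i 0 \<noteq> 0\<close> by simp
  ultimately show ?thesis using sum_1 by linarith
qed

lemma Lam_dominated:
  "canonical_mps N chi Gam Lam \<Longrightarrow> i \<le> N \<Longrightarrow> b < chi i \<Longrightarrow> \<bar>Lam i b\<bar> \<le> Lam i b"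
  using canonical_mpsD(6) by fastforce

lemma trunc_weights_dominated:
  "canonical_mps N chi Gam Lam \<Longrightarrow> i \<le> N \<Longrightarrow> b < chi i \<Longrightarrow> \<bar>trunc_weights M chi' Lam i b\<bar> \<le> Lam i b"
  using canonical_mpsD(6) by (fastforce simp: trunc_weights_def)

lemma sum_cmod_cnj_mult_mps_vec_le:
  assumes can: "canonical_mps N chi Gam Lam"
    and W: "\<And>i b. i \<le> N \<Longrightarrow> b < chi i \<Longrightarrow> \<bar>W i b\<bar> \<le> Lam i b"
    and W': "\<And>i b. i \<le> N \<Longrightarrow> b < chi i \<Longrightarrow> \<bar>W' i b\<bar> \<le> Lam i b"
    and k: "k \<le> N" and \<alpha>: "\<alpha> < chi k"
  shows "(\<Sum>\<sigma>\<in>spin_configs k. cmod (cnj (mps_vec Gam W chi \<sigma> k \<alpha>) * mps_vec Gam W' chi \<sigma> k \<alpha>))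
         \<le> (Lam k \<alpha>)\<^sup>2"
proof -
  let ?u = "\<lambda>\<sigma>. cmod (mps_vec Gam W chi \<sigma> k \<alpha>)"
  let ?v = "\<lambda>\<sigma>. cmod (mps_vec Gam W' chi \<sigma> k \<alpha>)"
  have "(\<Sum>\<sigma>\<in>spin_configs k. cmod (cnj (mps_vec Gam W chi \<sigma> k \<alpha>) * mps_vec Gam W' chi \<sigma> k \<alpha>))
      \<le> (\<Sum>\<sigma>\<in>spin_configs k. ((?u \<sigma>)\<^sup>2 + (?v \<sigma>)\<^sup>2) / 2)"
  proof (rule sum_mono)
    fix \<sigma>
    have "0 \<le> (?u \<sigma> - ?v \<sigma>)\<^sup>2" by simp
    then show "cmod (cnj (mps_vec Gam W chi \<sigma> k \<alpha>) * mps_vec Gam W' chi \<sigma> k \<alpha>) \<le> ((?u \<sigma>)\<^sup>2 + (?v \<sigma>)\<^sup>2) / 2"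
      by (simp add: norm_mult power2_eq_square algebra_simps)
  qed
  also have "\<dots> = ((\<Sum>\<sigma>\<in>spin_configs k. (?u \<sigma>)\<^sup>2) + (\<Sum>\<sigma>\<in>spin_configs k. (?v \<sigma>)\<^sup>2)) / 2"
    unfolding sum_divide_distrib[symmetric] sum.distrib ..
  also have "\<dots> \<le> (Lam k \<alpha>)\<^sup>2"
    using mps_vec_sum_sq_le[OF can W k \<alpha>] mps_vec_sum_sq_le[OF can W' k \<alpha>] by simp
  finally show ?thesis .
qed

text \<open>Overlap of the length-\<open>k\<close> partial contractions of \<open>\<Psi>\<close> and of its compression; note
  that \<open>trunc_weights k\<close> truncates only the bonds strictly inside \<open>{0..k}\<close>.\<close>

definition trunc_overlap ::
  "(nat \<Rightarrow> nat) \<Rightarrow> (nat \<Rightarrow> nat \<Rightarrow> nat \<Rightarrow> nat \<Rightarrow> complex) \<Rightarrow> (nat \<Rightarrow> nat \<Rightarrow> real) \<Rightarrow> nat \<Rightarrow> nat \<Rightarrow> complex"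
  where
  "trunc_overlap chi Gam Lam chi' k = (\<Sum>\<sigma>\<in>spin_configs k. \<Sum>b<chi k.
      cnj (mps_vec Gam Lam chi \<sigma> k b) * mps_vec Gam (trunc_weights k chi' Lam) chi \<sigma> k b)"

lemma trunc_overlap_0:
  assumes "canonical_mps N chi Gam Lam"
  shows "trunc_overlap chi Gam Lam chi' 0 = 1"
  using canonical_mpsD(1,3)[OF assms] by (simp add: trunc_overlap_def spin_configs_0 trunc_weights_def)

lemma mps_vec_trunc_weights_Suc:
  "mps_vec Gam (trunc_weights (Suc k) chi' Lam) chi \<sigma> k \<alpha>
     = (if 0 < k \<and> chi' \<le> \<alpha> then 0 else mps_vec Gam (trunc_weights k chi' Lam) chi \<sigma> k \<alpha>)"
proof (cases k)
  case 0
  then show ?thesis by (simp add: trunc_weights_def)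
next
  case (Suc j)
  have "mps_vec Gam (trunc_weights (Suc k) chi' Lam) chi \<sigma> j = mps_vec Gam (trunc_weights k chi' Lam) chi \<sigma> j"
    using Suc by (intro mps_vec_cong) (auto simp: trunc_weights_def)
  then show ?thesis using Suc by (simp add: trunc_weights_def)
qed

lemma trunc_overlap_Suc:
  assumes can: "canonical_mps N chi Gam Lam" and k: "Suc k \<le> N"
  shows "trunc_overlap chi Gam Lam chi' (Suc k) = trunc_overlap chi Gam Lam chi' k
    - (if k = 0 then 0 else \<Sum>\<alpha>\<in>{chi'..<chi k}. \<Sum>\<sigma>\<in>spin_configs k.
         cnj (mps_vec Gam Lam chi \<sigma> k \<alpha>) * mps_vec Gam (trunc_weights k chi' Lam) chi \<sigma> k \<alpha>)"
proof -
  let ?u = "\<lambda>\<sigma> \<alpha>. mps_vec Gam Lam chi \<sigma> k \<alpha>"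
  let ?v = "\<lambda>\<sigma> \<alpha>. mps_vec Gam (trunc_weights k chi' Lam) chi \<sigma> k \<alpha>"
  let ?v' = "\<lambda>\<sigma> \<alpha>. mps_vec Gam (trunc_weights (Suc k) chi' Lam) chi \<sigma> k \<alpha>"
  let ?discarded = "\<lambda>\<sigma> \<alpha>. if 0 < k \<and> chi' \<le> \<alpha> then cnj (?u \<sigma> \<alpha>) * ?v \<sigma> \<alpha> else 0"
  have last_bond: "trunc_weights (Suc k) chi' Lam (Suc k) = Lam (Suc k)"
    by (auto simp: trunc_weights_def)
  have "trunc_overlap chi Gam Lam chi' (Suc k) = (\<Sum>\<sigma>\<in>spin_configs k. \<Sum>s<2. \<Sum>\<beta><chi (Suc k).
      cnj (\<Sum>\<alpha><chi k. Gam (Suc k) s \<alpha> \<beta> * complex_of_real (Lam (Suc k) \<beta>) * ?u \<sigma> \<alpha>)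
        * (\<Sum>\<alpha><chi k. Gam (Suc k) s \<alpha> \<beta> * complex_of_real (Lam (Suc k) \<beta>) * ?v' \<sigma> \<alpha>))"
    unfolding trunc_overlap_def sum_spin_configs_Suc mps_vec_Suc_fun_upd last_bond ..
  also have "\<dots> = (\<Sum>\<sigma>\<in>spin_configs k. \<Sum>\<alpha><chi k. cnj (?u \<sigma> \<alpha>) * ?v' \<sigma> \<alpha>)"
    using right_canonical_inner_preserving[OF can _ k] by simp
  also have "\<dots> = (\<Sum>\<sigma>\<in>spin_configs k. \<Sum>\<alpha><chi k. cnj (?u \<sigma> \<alpha>) * ?v \<sigma> \<alpha> - ?discarded \<sigma> \<alpha>)"
    by (intro sum.cong refl) (simp add: mps_vec_trunc_weights_Suc)
  also have "\<dots> = trunc_overlap chi Gam Lam chi' k - (\<Sum>\<sigma>\<in>spin_configs k. \<Sum>\<alpha><chi k. ?discarded \<sigma> \<alpha>)"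
    unfolding trunc_overlap_def by (simp add: sum_subtractf)
  also have "(\<Sum>\<sigma>\<in>spin_configs k. \<Sum>\<alpha><chi k. ?discarded \<sigma> \<alpha>)
      = (if k = 0 then 0 else \<Sum>\<alpha>\<in>{chi'..<chi k}. \<Sum>\<sigma>\<in>spin_configs k. cnj (?u \<sigma> \<alpha>) * ?v \<sigma> \<alpha>)"
  proof -
    have "{\<alpha> \<in> {..<chi k}. chi' \<le> \<alpha>} = {chi'..<chi k}" by auto
    then show ?thesis
      by (subst sum.swap) (simp add: sum.inter_filter[symmetric])
  qed
  finally show ?thesis .
qed

lemma Re_trunc_overlap_ge:
  assumes can: "canonical_mps N chi Gam Lam"
  shows "k \<le> N \<Longrightarrow> 1 - (\<Sum>i\<in>{1..<k}. eps_bond chi Lam chi' i) \<le> Re (trunc_overlap chi Gam Lam chi' k)"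
proof (induction k)
  case 0
  then show ?case using trunc_overlap_0[OF can] by simp
next
  case (Suc k)
  define d where "d = (if k = 0 then 0 else \<Sum>\<alpha>\<in>{chi'..<chi k}. \<Sum>\<sigma>\<in>spin_configs k.
    cnj (mps_vec Gam Lam chi \<sigma> k \<alpha>) * mps_vec Gam (trunc_weights k chi' Lam) chi \<sigma> k \<alpha>)"
  have "cmod d \<le> (if k = 0 then 0 else eps_bond chi Lam chi' k)"
  proof (cases "k = 0")
    case False
    have "cmod d \<le> (\<Sum>\<alpha>\<in>{chi'..<chi k}. \<Sum>\<sigma>\<in>spin_configs k.
        cmod (cnj (mps_vec Gam Lam chi \<sigma> k \<alpha>) * mps_vec Gam (trunc_weights k chi' Lam) chi \<sigma> k \<alpha>))"
      unfolding d_def using False by (auto intro: order.trans[OF norm_sum sum_mono[OF norm_sum]])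
    also have "\<dots> \<le> (\<Sum>\<alpha>\<in>{chi'..<chi k}. (Lam k \<alpha>)\<^sup>2)"
      using Suc.prems
      by (intro sum_mono sum_cmod_cnj_mult_mps_vec_le[OF can Lam_dominated[OF can] trunc_weights_dominated[OF can]]) auto
    finally show ?thesis using False by (simp add: eps_bond_def)
  qed (simp add: d_def)
  moreover have "(\<Sum>i\<in>{1..<Suc k}. eps_bond chi Lam chi' i)
      = (\<Sum>i\<in>{1..<k}. eps_bond chi Lam chi' i) + (if k = 0 then 0 else eps_bond chi Lam chi' k)"
    by (cases k) (auto simp: sum.atLeastLessThan_Suc)
  moreover have "Re d \<le> cmod d" by (rule complex_Re_le_cmod)
  ultimately show ?case
    using Suc trunc_overlap_Suc[OF can Suc.prems, of chi'] unfolding d_def[symmetric] by simp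
qed

lemma mps_norm_eq_L2_set:
  "mps_norm N chi Gam W = L2_set (\<lambda>\<sigma>. cmod (mps_vec Gam W chi \<sigma> N 0)) (spin_configs N)"
  unfolding mps_norm_def mps_amp_def L2_set_def spin_configs_def ..

lemma mps_norm_trunc_le_1:
  assumes can: "canonical_mps N chi Gam Lam"
  shows "mps_norm N chi Gam (trunc_weights N chi' Lam) \<le> 1"
proof -
  have "(\<Sum>\<sigma>\<in>spin_configs N. (cmod (mps_vec Gam (trunc_weights N chi' Lam) chi \<sigma> N 0))\<^sup>2) \<le> (Lam N 0)\<^sup>2"
    using canonical_mpsD(2)[OF can]
    by (intro mps_vec_sum_sq_le[OF can trunc_weights_dominated[OF can]]) auto
  then show ?thesis
    using canonical_mpsD(4)[OF can] by (simp add: mps_norm_eq_L2_set L2_set_def)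
qed

lemma mps_norm_trunc_ge:
  assumes can: "canonical_mps N chi Gam Lam" and normalized: "mps_norm N chi Gam Lam = 1"
  shows "1 - eps_total N chi Lam chi' \<le> mps_norm N chi Gam (trunc_weights N chi' Lam)"
proof -
  let ?a = "\<lambda>\<sigma>. mps_vec Gam Lam chi \<sigma> N 0"
  let ?b = "\<lambda>\<sigma>. mps_vec Gam (trunc_weights N chi' Lam) chi \<sigma> N 0"
  have overlap: "trunc_overlap chi Gam Lam chi' N = (\<Sum>\<sigma>\<in>spin_configs N. cnj (?a \<sigma>) * ?b \<sigma>)"
    using canonical_mpsD(2)[OF can] by (simp add: trunc_overlap_def)
  have "1 - eps_total N chi Lam chi' \<le> Re (trunc_overlap chi Gam Lam chi' N)"
    using Re_trunc_overlap_ge[OF can, of N chi'] unfolding eps_total_def by simp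
  also have "\<dots> \<le> cmod (\<Sum>\<sigma>\<in>spin_configs N. cnj (?a \<sigma>) * ?b \<sigma>)"
    unfolding overlap by (rule complex_Re_le_cmod)
  also have "\<dots> \<le> (\<Sum>\<sigma>\<in>spin_configs N. \<bar>cmod (?a \<sigma>)\<bar> * \<bar>cmod (?b \<sigma>)\<bar>)"
    by (rule order.trans[OF norm_sum]) (simp add: norm_mult)
  also have "\<dots> \<le> mps_norm N chi Gam Lam * mps_norm N chi Gam (trunc_weights N chi' Lam)"
    unfolding mps_norm_eq_L2_set by (rule L2_set_mult_ineq)
  finally show ?thesis using normalized by simp
qed

lemma eps_total_nonneg: "0 \<le> eps_total N chi Lam chi'"
  unfolding eps_total_def by (intro sum_nonneg eps_bond_nonneg)

lemma prod_inverse_sqrt: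
  fixes f :: "'a \<Rightarrow> real"
  shows "(\<Prod>i\<in>A. 1 / sqrt (f i)) = 1 / sqrt (\<Prod>i\<in>A. f i)"
  by (induction A rule: infinite_finite_induct) (auto simp: real_sqrt_mult)

lemma nu_prod_ge_1:
  assumes can: "canonical_mps N chi Gam Lam" and chi': "1 \<le> chi'"
  shows "1 \<le> nu_prod N chi Lam chi'"
  unfolding nu_prod_def
proof (rule prod_ge_1)
  fix i assume "i \<in> {1..<N}"
  then have "eps_bond chi Lam chi' i < 1" by (intro eps_bond_less_1[OF can _ chi']) simp
  then have "0 < sqrt (1 - eps_bond chi Lam chi' i)" "sqrt (1 - eps_bond chi Lam chi' i) \<le> 1"
    using eps_bond_nonneg[of chi Lam chi' i] by auto
  then show "1 \<le> 1 / sqrt (1 - eps_bond chi Lam chi' i)" by simp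
qed

lemma nu_prod_le:
  assumes can: "canonical_mps N chi Gam Lam" and chi': "1 \<le> chi'" and small: "eps_total N chi Lam chi' < 1"
  shows "nu_prod N chi Lam chi' \<le> 1 / sqrt (1 - eps_total N chi Lam chi')"
proof -
  have "1 - eps_total N chi Lam chi' \<le> (\<Prod>i\<in>{1..<N}. 1 - eps_bond chi Lam chi' i)"
    unfolding eps_total_def using eps_bond_nonneg eps_bond_less_1[OF can _ chi']
    by (intro Weierstrass_prod_ineq) (simp add: less_imp_le)
  then have "1 / sqrt (\<Prod>i\<in>{1..<N}. 1 - eps_bond chi Lam chi' i) \<le> 1 / sqrt (1 - eps_total N chi Lam chi')"
    using small by (intro divide_left_mono) auto
  then show ?thesis unfolding nu_prod_def prod_inverse_sqrt .
qed

lemma one_minus_sqrt_double_le: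
  fixes E n :: real
  assumes "0 \<le> E" "0 \<le> n" "1 - E \<le> n"
  shows "1 - sqrt (2 * E) \<le> n"
proof (cases "E \<le> 2")
  case True
  then have "E\<^sup>2 \<le> 2 * E" using \<open>0 \<le> E\<close> by (simp add: power2_eq_square mult_right_mono)
  then have "E \<le> sqrt (2 * E)" by (rule real_le_rsqrt)
  then show ?thesis using assms(3) by linarith
next
  case False
  then have "1 \<le> sqrt (2 * E)" by (simp add: real_le_rsqrt)
  then show ?thesis using assms(2) by linarith
qed

lemma one_minus_sqrt_double_le_sqrt:
  fixes E :: real
  assumes "0 \<le> E" "sqrt (2 * E) \<le> 1"
  shows "1 - sqrt (2 * E) \<le> sqrt (1 - E)"
proof (rule real_le_rsqrt)
  define t where "t = sqrt (2 * E)"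
  have "0 \<le> t" "t \<le> 1" "E = t\<^sup>2 / 2"
    using assms by (auto simp: t_def)
  moreover from \<open>0 \<le> t\<close> \<open>t \<le> 1\<close> have "t * t \<le> t" by (intro mult_left_le_one_le)
  ultimately show "(1 - sqrt (2 * E))\<^sup>2 \<le> 1 - E"
    unfolding t_def[symmetric] by (simp add: power2_eq_square algebra_simps)
qed

lemma n_lower_le_1:
  assumes can: "canonical_mps N chi Gam Lam" and chi': "1 \<le> chi'"
  shows "n_lower N chi Lam chi' \<le> 1"
proof -
  let ?E = "eps_total N chi Lam chi'" and ?\<nu> = "nu_prod N chi Lam chi'"
  have \<nu>: "0 \<le> ?\<nu>" using nu_prod_ge_1[OF can chi'] by simp
  show ?thesis
  proof (cases "sqrt (2 * ?E) \<le> 1")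
    case True
    then have "2 * ?E \<le> 1" by simp
    then have "0 < sqrt (1 - ?E)" by simp
    have "(1 - sqrt (2 * ?E)) * ?\<nu> \<le> (1 - sqrt (2 * ?E)) * (1 / sqrt (1 - ?E))"
      using True \<open>2 * ?E \<le> 1\<close> nu_prod_le[OF can chi'] by (intro mult_left_mono) auto
    also have "\<dots> \<le> 1"
      using one_minus_sqrt_double_le_sqrt[OF eps_total_nonneg True] \<open>0 < sqrt (1 - ?E)\<close> by simp
    finally show ?thesis unfolding n_lower_def .
  next
    case False
    then have "1 - sqrt (2 * ?E) \<le> 0" by linarith
    then have "(1 - sqrt (2 * ?E)) * ?\<nu> \<le> 0" using \<nu> by (rule mult_nonpos_nonneg)
    then show ?thesis unfolding n_lower_def by linarith
  qed
qed

lemma stab_norm_bounds: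
  assumes can: "canonical_mps N chi Gam Lam" and normalized: "mps_norm N chi Gam Lam = 1"
    and chi': "1 \<le> chi'"
  shows "n_lower N chi Lam chi' \<le> stab_norm N chi Gam Lam chi'"
    and "stab_norm N chi Gam Lam chi' \<le> n_upper N chi Lam chi'"
    and "n_lower N chi Lam chi' \<le> 1"
    and "1 \<le> n_upper N chi Lam chi'"
proof -
  let ?n = "mps_norm N chi Gam (trunc_weights N chi' Lam)" and ?\<nu> = "nu_prod N chi Lam chi'"
  have "0 \<le> ?n" by (simp add: mps_norm_eq_L2_set)
  have \<nu>: "0 \<le> ?\<nu>" using nu_prod_ge_1[OF can chi'] by simp
  have "1 - sqrt (2 * eps_total N chi Lam chi') \<le> ?n"
    using eps_total_nonneg \<open>0 \<le> ?n\<close> mps_norm_trunc_ge[OF can normalized]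
    by (rule one_minus_sqrt_double_le)
  then show "n_lower N chi Lam chi' \<le> stab_norm N chi Gam Lam chi'"
    unfolding n_lower_def stab_norm_def using \<nu> by (rule mult_right_mono)
  show "stab_norm N chi Gam Lam chi' \<le> n_upper N chi Lam chi'"
    unfolding stab_norm_def n_upper_def using mps_norm_trunc_le_1[OF can] \<nu>
    by (simp add: mult_left_le_one_le \<open>0 \<le> ?n\<close>)
  show "n_lower N chi Lam chi' \<le> 1" by (rule n_lower_le_1[OF can chi'])
  show "1 \<le> n_upper N chi Lam chi'" unfolding n_upper_def by (rule nu_prod_ge_1[OF can chi'])
qed

text \<open>Both deviations are bounded by \<open>sqrt (2 * E) + (1 / sqrt (1 - E) - 1)\<close>, which is continuous
  in \<open>E = eps_total\<close> and vanishes at \<open>0\<close>.\<close>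

lemma n_lower_n_upper_uniformly_close_to_1:
  fixes \<delta> :: real
  assumes "0 < \<delta>"
  shows "\<exists>\<eta>>0. \<forall>N chi Gam Lam chi'. canonical_mps N chi Gam Lam \<and> 1 \<le> chi' \<and> eps_total N chi Lam chi' < \<eta>
           \<longrightarrow> \<bar>n_lower N chi Lam chi' - 1\<bar> < \<delta> \<and> \<bar>n_upper N chi Lam chi' - 1\<bar> < \<delta>"
proof -
  define g where "g E = sqrt (2 * E) + (1 / sqrt (1 - E) - 1)" for E :: real
  have "continuous (at 0) g" unfolding g_def by (intro continuous_intros) auto
  then obtain \<eta> where "0 < \<eta>" and \<eta>: "\<And>E. \<bar>E\<bar> < \<eta> \<Longrightarrow> \<bar>g E\<bar> < \<delta>"
    using \<open>0 < \<delta>\<close> unfolding continuous_at_eps_delta by (force simp: g_def dist_real_def)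
  have "\<bar>n_lower N chi Lam chi' - 1\<bar> < \<delta> \<and> \<bar>n_upper N chi Lam chi' - 1\<bar> < \<delta>"
    if can: "canonical_mps N chi Gam Lam" and chi': "1 \<le> chi'" and small: "eps_total N chi Lam chi' < min \<eta> (1/2)"
    for N chi Gam Lam chi'
  proof -
    let ?E = "eps_total N chi Lam chi'" and ?\<nu> = "nu_prod N chi Lam chi'"
    have "0 \<le> ?E" by (rule eps_total_nonneg)
    then have "1 \<le> 1 / sqrt (1 - ?E)" "0 \<le> sqrt (2 * ?E)" "sqrt (2 * ?E) < 1" using small by auto
    moreover have "g ?E < \<delta>"
      using \<eta>[of ?E] small \<open>0 \<le> ?E\<close> by (simp add: abs_less_iff)
    ultimately have "sqrt (2 * ?E) < \<delta>" "1 / sqrt (1 - ?E) - 1 < \<delta>"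
      unfolding g_def by linarith+
    moreover have "1 \<le> ?\<nu>" "?\<nu> \<le> 1 / sqrt (1 - ?E)"
      using nu_prod_ge_1[OF can chi'] nu_prod_le[OF can chi'] small by auto
    moreover have "1 - sqrt (2 * ?E) \<le> n_lower N chi Lam chi'"
      unfolding n_lower_def using \<open>sqrt (2 * ?E) < 1\<close> \<open>1 \<le> ?\<nu>\<close>
      by (simp add: mult_le_cancel_left1)
    moreover have "n_lower N chi Lam chi' \<le> 1" by (rule n_lower_le_1[OF can chi'])
    ultimately show ?thesis unfolding n_upper_def by linarith
  qed
  then show ?thesis using \<open>0 < \<eta>\<close> by (intro exI[of _ "min \<eta> (1/2)"]) auto
qed

theorem theorem3:
  shows "(\<forall>N chi Gam Lam (chi'::nat).
            canonical_mps N chi Gam Lam \<and> mps_norm N chi Gam Lam = 1 \<and> chi' \<ge> 1 \<longrightarrow>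
              n_lower N chi Lam chi' \<le> stab_norm N chi Gam Lam chi' \<and>
              stab_norm N chi Gam Lam chi' \<le> n_upper N chi Lam chi' \<and>
              n_lower N chi Lam chi' \<le> 1 \<and> n_upper N chi Lam chi' \<ge> 1)
       \<and> (\<forall>\<delta>::real. \<delta> > 0 \<longrightarrow> (\<exists>\<eta>::real. \<eta> > 0 \<and>
            (\<forall>N chi Gam Lam (chi'::nat).
               canonical_mps N chi Gam Lam \<and> mps_norm N chi Gam Lam = 1 \<and> chi' \<ge> 1
               \<and> eps_total N chi Lam chi' < \<eta> \<longrightarrow>
                 \<bar>n_lower N chi Lam chi' - 1\<bar> < \<delta> \<and> \<bar>n_upper N chi Lam chi' - 1\<bar> < \<delta>)))"
proof (intro conjI allI impI; (elim conjE)?)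
  fix \<delta> :: real
  assume "\<delta> > 0"
  then obtain \<eta> where "\<eta> > 0" and "\<forall>N chi Gam Lam chi'.
      canonical_mps N chi Gam Lam \<and> 1 \<le> chi' \<and> eps_total N chi Lam chi' < \<eta>
        \<longrightarrow> \<bar>n_lower N chi Lam chi' - 1\<bar> < \<delta> \<and> \<bar>n_upper N chi Lam chi' - 1\<bar> < \<delta>"
    using n_lower_n_upper_uniformly_close_to_1 by blast
  then show "\<exists>\<eta>>0. \<forall>N chi Gam Lam chi'.
      canonical_mps N chi Gam Lam \<and> mps_norm N chi Gam Lam = 1 \<and> chi' \<ge> 1 \<and> eps_total N chi Lam chi' < \<eta>
        \<longrightarrow> \<bar>n_lower N chi Lam chi' - 1\<bar> < \<delta> \<and> \<bar>n_upper N chi Lam chi' - 1\<bar> < \<delta>"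
    by blast
qed (simp_all add: stab_norm_bounds)

end
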